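(* Let $\alpha\in(0,1]$ and let $\Omega_\alpha\subset\mathbb{C}$ be the bounded open region enclosed by the closed curve $$\beta(t)=1+2^{\alpha}\left(\sin\tfrac{t}{2}\right)^{\alpha}e^{\,i\left(\alpha\frac{\pi}{2}+t\left(1-\frac{\alpha}{2}\right)\right)},\qquad 0\le t\le 2\pi .$$ Then for a real number $\lambda$, $\lambda\in\Omega_\alpha$ if and only if $1-2^{\alpha}<\lambda<1$.
   Context: Equivalently $\beta(t)=1+e^{it}(1-e^{-it})^{\alpha}$ with the principal branch of the power. $\Omega_\alpha$ is the stability region for eigenvalues of the connectivity matrix in linear fractional-order coupled map lattices of order $\alpha$. *)

theory Defs
  imports "HOL-Analysis.Analysis"
begin

definition frac_beta :: "real \<Rightarrow> real \<Rightarrow> complex" where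
  "frac_beta \<alpha> t = 1 + complex_of_real ((2 powr \<alpha>) * (sin (t / 2)) powr \<alpha>)
        * cis (\<alpha> * pi / 2 + t * (1 - \<alpha> / 2))"

definition Omega :: "real \<Rightarrow> complex set" where
  "Omega \<alpha> = inside (frac_beta \<alpha> ` {0..2 * pi})"

end

theory Submission
  imports Defs
begin

(*
  In the coordinates w = 1 - z = r cis phi the curve is the polar graph
  r = 2^alpha cos(phi / (2 - alpha))^alpha over |phi| <= (1 - alpha/2) pi, a curve star-shaped
  around 1. So the gap |1 - z| minus this radius is continuous off z = 1 and vanishes only on the
  curve; it therefore keeps its sign on each component of the complement, and the component of a
  real point of (1 - 2^alpha, 1) lies in the bounded set where the gap is negative. Conversely the
  curve meets the real axis only in 1 and 1 - 2^alpha, so every other real point is joined to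
  infinity by a real ray missing the curve.
*)

lemma abs_Arg_eq_arccos:
  assumes "w \<noteq> 0"
  shows "\<bar>Arg w\<bar> = arccos (Re w / cmod w)"
proof -
  have "Re w / cmod w = cos (Arg w)" using cos_Arg[OF assms] by simp
  moreover have "- pi < Arg w" "Arg w \<le> pi" using Arg_bounded by auto
  ultimately show ?thesis
    by (cases "Arg w \<ge> 0") (auto simp: arccos_cos arccos_cos2)
qed

lemma continuous_on_abs_Arg: "continuous_on (- {0}) (\<lambda>w. \<bar>Arg w\<bar>)"
proof -
  have "-1 \<le> Re w / cmod w \<and> Re w / cmod w \<le> 1" if "w \<noteq> 0" for w :: complex
    using abs_Re_le_cmod[of w] that by (auto simp: divide_le_eq le_divide_eq abs_le_iff)
  then have "continuous_on (- {0}) (\<lambda>w. arccos (Re w / cmod w))"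
    by (intro continuous_intros) auto
  then show ?thesis
    by (rule continuous_on_cong[THEN iffD1, rotated 2]) (auto simp: abs_Arg_eq_arccos)
qed

lemma not_in_inside_if_unbounded_connected:
  assumes "connected T" "T \<inter> S = {}" "x \<in> T" "\<not> bounded T"
  shows "x \<notin> inside S"
proof -
  have "T \<subseteq> connected_component_set (- S) x"
    using assms by (intro connected_component_maximal) auto
  then show ?thesis
    using assms(4) bounded_subset by (auto simp: inside_def)
qed

lemma in_inside_if_sign_bounded:
  fixes f :: "'a::real_normed_vector \<Rightarrow> real"
  assumes cont: "continuous_on (- S) f" and nonzero: "\<And>z. z \<notin> S \<Longrightarrow> f z \<noteq> 0"
    and "x \<notin> S" "f x < 0" and bdd: "bounded {z. z \<notin> S \<and> f z < 0}"
  shows "x \<in> inside S"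
proof -
  define C where "C = connected_component_set (- S) x"
  have "C \<subseteq> - S" "connected C" "x \<in> C"
    using \<open>x \<notin> S\<close> by (auto simp: C_def connected_component_subset)
  have "f z < 0" if "z \<in> C" for z
  proof (rule ccontr)
    assume "\<not> f z < 0"
    moreover have "connected (f ` C)"
      using \<open>connected C\<close> \<open>C \<subseteq> - S\<close> cont
      by (intro connected_continuous_image) (auto intro: continuous_on_subset)
    moreover have "f x \<in> f ` C" "f z \<in> f ` C"
      using \<open>x \<in> C\<close> that by auto
    ultimately have "0 \<in> f ` C"
      using \<open>f x < 0\<close> unfolding connected_iff_interval by (meson less_imp_le not_le)
    then show False
      using nonzero \<open>C \<subseteq> - S\<close> by auto
  qed
  then have "C \<subseteq> {z. z \<notin> S \<and> f z < 0}"
    using \<open>C \<subseteq> - S\<close> by auto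
  then show ?thesis
    using bdd bounded_subset \<open>x \<notin> S\<close> by (auto simp: inside_def C_def)
qed

lemma not_bounded_of_real_atLeast: "\<not> bounded (complex_of_real ` {x..})"
proof
  assume "bounded (complex_of_real ` {x..})"
  then obtain B where "\<forall>y\<ge>x. \<bar>y\<bar> \<le> B"
    by (auto simp: bounded_iff)
  then have "\<bar>max x (\<bar>B\<bar> + 1)\<bar> \<le> B"
    using max.cobounded1 by blast
  then show False
    by linarith
qed

lemma not_bounded_of_real_atMost: "\<not> bounded (complex_of_real ` {..x})"
proof
  assume "bounded (complex_of_real ` {..x})"
  then obtain B where "\<forall>y\<le>x. \<bar>y\<bar> \<le> B"
    by (auto simp: bounded_iff)
  then have "\<bar>min x (- \<bar>B\<bar> - 1)\<bar> \<le> B"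
    using min.cobounded1 by blast
  then show False
    by linarith
qed

lemma of_real_notin_inside_if_ray_avoids:
  assumes "complex_of_real ` {x..} \<inter> S = {} \<or> complex_of_real ` {..x} \<inter> S = {}"
  shows "complex_of_real x \<notin> inside S"
  using assms
proof
  assume "complex_of_real ` {x..} \<inter> S = {}"
  then show ?thesis
    by (intro not_in_inside_if_unbounded_connected[OF _ _ _ not_bounded_of_real_atLeast]
        connected_continuous_image continuous_intros) auto
next
  assume "complex_of_real ` {..x} \<inter> S = {}"
  then show ?thesis
    by (intro not_in_inside_if_unbounded_connected[OF _ _ _ not_bounded_of_real_atMost]
        connected_continuous_image continuous_intros) auto
qed

(* frac_beta a t = 1 - r cis phi with phi = (1 - a/2) (t - pi) and r = 2^a sin(t/2)^a = 2^a cos(phi/(2 - a))^a. *)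
definition curve_radius :: "real \<Rightarrow> real \<Rightarrow> real" where
  "curve_radius a \<phi> = 2 powr a * max 0 (cos (\<phi> / (2 - a))) powr a"

definition boundary_gap :: "real \<Rightarrow> complex \<Rightarrow> real" where
  "boundary_gap a z = cmod (1 - z) - curve_radius a (Arg (1 - z))"

lemma curve_radius_abs [simp]: "curve_radius a \<bar>\<phi>\<bar> = curve_radius a \<phi>"
  by (cases "\<phi> \<ge> 0") (simp_all add: curve_radius_def)

lemma curve_radius_0 [simp]: "curve_radius a 0 = 2 powr a"
  by (simp add: curve_radius_def)

lemma curve_radius_le:
  assumes "0 \<le> a"
  shows "curve_radius a \<phi> \<le> 2 powr a"
proof -
  have "max 0 (cos (\<phi> / (2 - a))) powr a \<le> 1 powr a"
    using assms by (intro powr_mono2) auto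
  then show ?thesis
    by (simp add: curve_radius_def mult_left_le)
qed

lemma continuous_on_curve_radius:
  assumes "0 < a"
  shows "continuous_on A (curve_radius a)"
  unfolding curve_radius_def divide_inverse
  by (intro continuous_intros continuous_on_powr') (use assms in auto)

lemma curve_radius_pos_imp_abs_less:
  assumes "0 < curve_radius a \<phi>" "\<bar>\<phi>\<bar> \<le> pi" "a \<le> 1"
  shows "\<bar>\<phi>\<bar> < (2 - a) * pi / 2"
proof -
  define y where "y = \<phi> / (2 - a)"
  have "cos y > 0"
    using assms(1) by (cases "cos y = 0") (auto simp: curve_radius_def y_def max_def split: if_splits)
  have "\<bar>y\<bar> \<le> pi"
    using assms(2,3) pi_ge_zero by (auto simp: y_def abs_divide divide_le_eq intro: order.trans)
  have "\<bar>y\<bar> < pi / 2"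
  proof (rule ccontr)
    assume "\<not> \<bar>y\<bar> < pi / 2"
    then have "cos \<bar>y\<bar> \<le> 0"
    proof (cases "\<bar>y\<bar> = pi / 2")
      case False
      then show ?thesis
        using \<open>\<not> \<bar>y\<bar> < pi / 2\<close> \<open>\<bar>y\<bar> \<le> pi\<close> by (intro less_imp_le cos_lt_zero_pi) auto
    qed (simp only: cos_pi_half order_refl)
    with \<open>cos y > 0\<close> show False
      by simp
  qed
  then show ?thesis
    using assms(3) by (simp add: y_def abs_divide field_simps)
qed

lemma frac_beta_polar:
  assumes "a < 2" "\<bar>\<phi>\<bar> \<le> (2 - a) * pi / 2"
  shows "frac_beta a (pi + 2 * \<phi> / (2 - a)) = 1 - complex_of_real (curve_radius a \<phi>) * cis \<phi>"
proof -
  define y where "y = \<phi> / (2 - a)"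
  have "\<bar>y\<bar> \<le> pi / 2"
    using assms by (simp add: y_def abs_divide field_simps)
  have "sin ((pi + 2 * \<phi> / (2 - a)) / 2) = sin (pi / 2 + y)"
    by (rule arg_cong[where f = sin]) (use assms(1) in \<open>simp add: y_def field_simps\<close>)
  also have "\<dots> = max 0 (cos y)"
    using \<open>\<bar>y\<bar> \<le> pi / 2\<close> by (simp add: sin_add cos_ge_zero abs_le_iff)
  finally have "sin ((pi + 2 * \<phi> / (2 - a)) / 2) = max 0 (cos y)" .
  moreover have "a * pi / 2 + (pi + 2 * \<phi> / (2 - a)) * (1 - a / 2) = pi + \<phi>"
    using assms(1) by (simp add: field_simps)
  ultimately show ?thesis
    by (simp add: frac_beta_def curve_radius_def y_def cis_mult[symmetric] del: sin_add)
qed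

lemma frac_beta_0 [simp]: "frac_beta a 0 = 1"
  by (simp add: frac_beta_def)

lemma frac_beta_pi [simp]: "frac_beta a pi = complex_of_real (1 - 2 powr a)"
proof -
  have "a * pi / 2 + pi * (1 - a / 2) = pi"
    by (simp add: algebra_simps)
  then show ?thesis
    by (simp add: frac_beta_def)
qed

lemma frac_beta_real_cases:
  assumes "0 < a" "a < 2" "t \<in> {0..2 * pi}" "Im (frac_beta a t) = 0"
  shows "frac_beta a t = 1 \<or> frac_beta a t = complex_of_real (1 - 2 powr a)"
proof (cases "sin (t / 2) powr a = 0")
  case True
  then show ?thesis
    by (simp add: frac_beta_def)
next
  case False
  define \<theta> where "\<theta> = a * pi / 2 + t * (1 - a / 2)"
  have "Im (frac_beta a t) = 2 powr a * sin (t / 2) powr a * sin \<theta>"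
    by (simp add: frac_beta_def \<theta>_def)
  then have "sin (\<theta> - pi) = 0"
    using assms(4) False by (simp add: sin_diff)
  moreover have "0 < \<theta>" "\<theta> < 2 * pi"
  proof -
    have "0 \<le> t * (1 - a / 2)"
      using assms(2,3) by simp
    moreover have "t * (1 - a / 2) \<le> 2 * pi * (1 - a / 2)"
      using assms(2,3) by (intro mult_right_mono) auto
    moreover have "2 * pi * (1 - a / 2) = 2 * pi - a * pi" "0 < a * pi"
      using assms(1) by (simp_all add: algebra_simps)
    ultimately show "0 < \<theta>" "\<theta> < 2 * pi"
      unfolding \<theta>_def by linarith+
  qed
  ultimately have "\<theta> = pi"
    using sin_eq_0_pi[of "\<theta> - pi"] by linarith
  then have "(t - pi) * (2 - a) = 0"
    by (simp add: \<theta>_def field_simps)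
  then have "t = pi"
    using assms(2) by simp
  then show ?thesis
    by simp
qed

lemma of_real_mem_curve_iff:
  assumes "0 < a" "a < 2"
  shows "complex_of_real y \<in> frac_beta a ` {0..2 * pi} \<longleftrightarrow> y = 1 \<or> y = 1 - 2 powr a"
proof
  assume "complex_of_real y \<in> frac_beta a ` {0..2 * pi}"
  then obtain t where t: "t \<in> {0..2 * pi}" and y: "frac_beta a t = complex_of_real y"
    by auto
  then have "frac_beta a t = 1 \<or> frac_beta a t = complex_of_real (1 - 2 powr a)"
    by (intro frac_beta_real_cases[OF assms]) simp_all
  then show "y = 1 \<or> y = 1 - 2 powr a"
    unfolding y by (metis of_real_1 of_real_eq_iff)
next
  assume "y = 1 \<or> y = 1 - 2 powr a"
  then have "complex_of_real y = frac_beta a 0 \<or> complex_of_real y = frac_beta a pi"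
    by auto
  then show "complex_of_real y \<in> frac_beta a ` {0..2 * pi}"
    using image_eqI[of _ "frac_beta a" 0 "{0..2 * pi}"] image_eqI[of _ "frac_beta a" pi "{0..2 * pi}"]
    by (auto simp del: frac_beta_0 frac_beta_pi)
qed

lemma boundary_gap_zero_imp_mem_curve:
  assumes "a \<le> 1" "z \<noteq> 1" "boundary_gap a z = 0"
  shows "z \<in> frac_beta a ` {0..2 * pi}"
proof -
  define \<phi> where "\<phi> = Arg (1 - z)"
  have radius: "cmod (1 - z) = curve_radius a \<phi>"
    using assms(3) by (simp add: boundary_gap_def \<phi>_def)
  moreover have "0 < cmod (1 - z)"
    using assms(2) by simp
  ultimately have "0 < curve_radius a \<phi>"
    by simp
  moreover have "\<bar>\<phi>\<bar> \<le> pi"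
    using Arg_bounded[of "1 - z"] by (auto simp: \<phi>_def)
  ultimately have "\<bar>\<phi>\<bar> < (2 - a) * pi / 2"
    using assms(1) by (rule curve_radius_pos_imp_abs_less)
  then have "pi + 2 * \<phi> / (2 - a) \<in> {0..2 * pi}"
    using assms(1) by (auto simp: field_simps abs_less_iff)
  moreover have "frac_beta a (pi + 2 * \<phi> / (2 - a)) = 1 - rcis (cmod (1 - z)) (Arg (1 - z))"
    using frac_beta_polar[of a \<phi>] \<open>\<bar>\<phi>\<bar> < (2 - a) * pi / 2\<close> assms(1)
    by (simp add: radius \<phi>_def rcis_def)
  then have "frac_beta a (pi + 2 * \<phi> / (2 - a)) = z"
    by (simp add: rcis_cmod_Arg)
  ultimately show ?thesis
    by (metis image_eqI)
qed

lemma continuous_on_boundary_gap: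
  assumes "0 < a"
  shows "continuous_on (- {1}) (boundary_gap a)"
proof -
  \<comment> \<open>Arg jumps across the negative axis, but curve_radius is even.\<close>
  have "continuous_on (- {1}) (\<lambda>z. \<bar>Arg (1 - z)\<bar>)"
    by (rule continuous_on_compose2[OF continuous_on_abs_Arg]) (auto intro: continuous_intros)
  then have "continuous_on (- {1}) (\<lambda>z. curve_radius a \<bar>Arg (1 - z)\<bar>)"
    by (rule continuous_on_compose2[OF continuous_on_curve_radius[OF assms]]) auto
  then show ?thesis
    unfolding boundary_gap_def curve_radius_abs by (intro continuous_intros)
qed

lemma boundary_gap_neg_imp_dist_less:
  assumes "0 \<le> a" "boundary_gap a z < 0"
  shows "dist 1 z < 2 powr a"
  using assms curve_radius_le[OF assms(1), of "Arg (1 - z)"]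
  by (simp add: boundary_gap_def dist_norm)

lemma boundary_gap_of_real:
  assumes "x < 1"
  shows "boundary_gap a (complex_of_real x) = 1 - x - 2 powr a"
proof -
  have "1 - complex_of_real x = complex_of_real (1 - x)"
    by simp
  then show ?thesis
    using assms by (simp add: boundary_gap_def del: of_real_diff)
qed

lemma of_real_notin_Omega:
  assumes "0 < a" "a < 2" "\<not> (1 - 2 powr a < x \<and> x < 1)"
  shows "complex_of_real x \<notin> Omega a"
proof -
  define S where "S = frac_beta a ` {0..2 * pi}"
  have real_S: "complex_of_real y \<in> S \<longleftrightarrow> y = 1 \<or> y = 1 - 2 powr a" for y
    unfolding S_def by (rule of_real_mem_curve_iff[OF assms(1,2)])
  have "complex_of_real x \<notin> inside S"
  proof (cases "complex_of_real x \<in> S")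
    case False
    then have "x \<noteq> 1" "x \<noteq> 1 - 2 powr a"
      using real_S by auto
    with assms(3) have "1 < x \<or> x < 1 - 2 powr a"
      by linarith
    then have "complex_of_real ` {x..} \<inter> S = {} \<or> complex_of_real ` {..x} \<inter> S = {}"
      using real_S powr_gt_zero[of 2 a] by (elim disjE) (auto simp del: powr_gt_zero)
    then show ?thesis
      by (rule of_real_notin_inside_if_ray_avoids)
  qed (simp add: inside_def)
  then show ?thesis
    by (simp add: Omega_def S_def)
qed

lemma of_real_in_Omega:
  assumes "0 < a" "a \<le> 1" "1 - 2 powr a < x" "x < 1"
  shows "complex_of_real x \<in> Omega a"
  unfolding Omega_def
proof (rule in_inside_if_sign_bounded[where f = "boundary_gap a"])
  let ?S = "frac_beta a ` {0..2 * pi}"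
  have "- ?S \<subseteq> - {1}"
    using of_real_mem_curve_iff[of a 1] assms(1,2) by auto
  then show "continuous_on (- ?S) (boundary_gap a)"
    using continuous_on_boundary_gap[OF assms(1)] by (rule continuous_on_subset[rotated])
  show "boundary_gap a z \<noteq> 0" if "z \<notin> ?S" for z
    using boundary_gap_zero_imp_mem_curve[OF assms(2), of z] that \<open>- ?S \<subseteq> - {1}\<close> by blast
  show "bounded {z. z \<notin> ?S \<and> boundary_gap a z < 0}"
    using boundary_gap_neg_imp_dist_less[of a] assms(1)
    by (intro bounded_subset[OF bounded_ball[of 1 "2 powr a"]]) auto
  show "complex_of_real x \<notin> ?S"
    using of_real_mem_curve_iff[of a x] assms by auto
  show "boundary_gap a (complex_of_real x) < 0"
    using assms(3,4) by (simp add: boundary_gap_of_real)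
qed

theorem mainTheorem2:
  fixes \<alpha> x :: real
  assumes "0 < \<alpha>" and "\<alpha> \<le> 1"
  shows "complex_of_real x \<in> Omega \<alpha> \<longleftrightarrow> 1 - 2 powr \<alpha> < x \<and> x < 1"
  using assms of_real_in_Omega[of \<alpha> x] of_real_notin_Omega[of \<alpha> x] by auto

end
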